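(* Let $f:\Sigma\to\mathbb{S}^4_1$ be a non-isotropic conformal marginally trapped immersion with null Gauss map $G:\Sigma\to\mathbb{S}^3$. Then $G$ is an envelope of the sphere congruence determined by $f$: every local lift $W$ of $G$ satisfies $\langle f,W\rangle=0$ and $\langle f,dW\rangle=0$. Moreover, the central sphere congruence of $G$ coincides with the one determined by $\pm f$, i.e. $V=f^\perp$ at every point, where $V=\mathrm{span}\{X,X_z,X_{\bar z},X_{z\bar z}\}$ for any local lift $X$ of $G$.
   Context: $\mathbb{R}^5_1$ is $\mathbb{R}^5$ with Lorentz product $\langle x,y\rangle=x_0y_0+x_1y_1+x_2y_2+x_3y_3-x_4y_4$, extended complex-bilinearly; $\mathbb{S}^4_1=\{\langle x,x\rangle=1\}$; $X$ future pointing means $\langle X,e_4\rangle<0$; $\mathcal L$ is the light cone and $\mathbb{S}^3\cong P(\mathcal L)$. $f:\Sigma\to\mathbb{S}^4_1$ is a conformal spacelike immersion, $\langle f_z,f_{\bar z}\rangle=e^{2u}$. A positively oriented orthonormal frame $\{N_1,N_2\}$ of the oriented Lorentzian normal bundle has $\langle N_1,N_1\rangle=1$, $\langle N_2,N_2\rangle=-1$, $\langle N_1,N_2\rangle=0$, $N_2$ future pointing and the orientation of $\nu(f)$. $\xi_1=\langle f_{zz},N_1\rangle$, $\xi_2=-\langle f_{zz},N_2\rangle$. $\mathbf H$ is defined by $f_{z\bar z}=-e^{2u}f+e^{2u}\mathbf H$; marginally trapped means $\langle\mathbf H,\mathbf H\rangle=0$, orientation chosen with $\mathbf H=h(N_1+N_2)$.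 $f$ is non-isotropic if $\langle f_{zz},f_{zz}\rangle=\xi_1^2-\xi_2^2$ never vanishes (then $\xi_1\ne\xi_2$ everywhere and $G$ is a conformal immersion). The null Gauss map is $G(x)=[N_1(x)+N_2(x)]$; a local lift of $G$ is a map $W$ into $\mathcal L$ with $[W]=G$. The sphere congruence determined by $f$ assigns to $x$ the $2$-sphere $P(f(x)^\perp\cap\mathcal L)\subset\mathbb{S}^3$; the central sphere congruence of $G$ is the rank 4 bundle $V$ (spheres $P(V_x\cap\mathcal L)$). *)

theory Defs
  imports "HOL-Analysis.Analysis"
begin

text \<open>Index 4 of type 5 is the timelike coordinate x_4.\<close>

definition lor :: "real^5 \<Rightarrow> real^5 \<Rightarrow> real" where
  "lor x y = x$0*y$0 + x$1*y$1 + x$2*y$2 + x$3*y$3 - x$4*y$4"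

definition clor :: "complex^5 \<Rightarrow> complex^5 \<Rightarrow> complex" where
  "clor x y = x$0*y$0 + x$1*y$1 + x$2*y$2 + x$3*y$3 - x$4*y$4"

definition e4 :: "real^5" where "e4 = axis 4 1"

definition cplx :: "real^5 \<Rightarrow> complex^5" where
  "cplx v = (\<chi> i. complex_of_real (v$i))"

definition cscale :: "complex \<Rightarrow> complex^5 \<Rightarrow> complex^5" where
  "cscale c v = (\<chi> i. c * v$i)"

definition pdx :: "(complex \<Rightarrow> 'a::real_normed_vector) \<Rightarrow> complex \<Rightarrow> 'a" where
  "pdx g p = vector_derivative (\<lambda>t::real. g (p + complex_of_real t)) (at 0)"

definition pdy :: "(complex \<Rightarrow> 'a::real_normed_vector) \<Rightarrow> complex \<Rightarrow> 'a" where
  "pdy g p = vector_derivative (\<lambda>t::real. g (p + \<i> * complex_of_real t)) (at 0)"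

definition dz :: "(complex \<Rightarrow> complex^5) \<Rightarrow> complex \<Rightarrow> complex^5" where
  "dz G p = cscale (1/2) (pdx G p - cscale \<i> (pdy G p))"

definition dzb :: "(complex \<Rightarrow> complex^5) \<Rightarrow> complex \<Rightarrow> complex^5" where
  "dzb G p = cscale (1/2) (pdx G p + cscale \<i> (pdy G p))"

fun Ck :: "nat \<Rightarrow> complex set \<Rightarrow> (complex \<Rightarrow> 'a::real_normed_vector) \<Rightarrow> bool" where
  "Ck 0 U g = continuous_on U g"
| "Ck (Suc k) U g = ((\<forall>p\<in>U. g differentiable (at p)) \<and> Ck k U (pdx g) \<and> Ck k U (pdy g))"

definition smooth_on :: "complex set \<Rightarrow> (complex \<Rightarrow> 'a::real_normed_vector) \<Rightarrow> bool" where
  "smooth_on U g = (\<forall>k. Ck k U g)"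

text \<open>A (smooth) local lift of the null Gauss map G = [N1 + N2] on U:
  a smooth map into the light cone minus 0 whose line is spanned by N1 + N2.\<close>
definition is_lift :: "complex set \<Rightarrow> (complex \<Rightarrow> real^5) \<Rightarrow> (complex \<Rightarrow> real^5)
    \<Rightarrow> (complex \<Rightarrow> real^5) \<Rightarrow> bool" where
  "is_lift U N1 N2 W = (smooth_on U W \<and>
     (\<forall>p\<in>U. W p \<noteq> 0 \<and> lor (W p) (W p) = 0 \<and> (\<exists>c::real. W p = c *\<^sub>R (N1 p + N2 p))))"

end

theory Submission
  imports Defs
begin

text \<open>
  At each point \<open>f, f\<^sub>z, f\<^sub>z\<^sub>b\<^sub>a\<^sub>r, N\<^sub>1, N\<^sub>2\<close> is a basis of \<open>\<complex>\<^sup>5\<close> with known Gram matrix, and a lift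
  \<open>X\<close> of \<open>G\<close> is a nonzero multiple of the null normal \<open>N\<^sub>1 + N\<^sub>2\<close>. Differentiating the identities
  \<open>\<langle>f, X\<rangle> = 0\<close>, \<open>\<langle>X, X\<rangle> = 0\<close> and \<open>\<langle>X, f\<^sub>z\<rangle> = 0\<close> shows that \<open>X, X\<^sub>z, X\<^sub>z\<^sub>b\<^sub>a\<^sub>r, X\<^sub>z\<^sub>z\<^sub>b\<^sub>a\<^sub>r\<close> are all
  orthogonal to \<open>f\<close>; for \<open>X\<^sub>z\<^sub>z\<^sub>b\<^sub>a\<^sub>r\<close> this uses that \<open>f\<^sub>z\<^sub>z\<^sub>b\<^sub>a\<^sub>r = e\<^sup>2\<^sup>u(H - f)\<close> with \<open>H\<close> along
  \<open>N\<^sub>1 + N\<^sub>2\<close>. Expanding in the frame gives \<open>\<langle>X\<^sub>z, X\<^sub>z\<rangle> = 0\<close> and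
  \<open>\<langle>X\<^sub>z, X\<^sub>z\<^sub>b\<^sub>a\<^sub>r\<rangle> = e\<^sup>-\<^sup>2\<^sup>u |\<langle>X, f\<^sub>z\<^sub>z\<rangle>|\<^sup>2\<close>, which is nonzero because \<open>f\<close> is non-isotropic.
  The Gram matrix of \<open>X, X\<^sub>z, X\<^sub>z\<^sub>b\<^sub>a\<^sub>r, X\<^sub>z\<^sub>z\<^sub>b\<^sub>a\<^sub>r\<close> is then nondegenerate, so these vectors
  span the four-dimensional \<open>f\<^sup>\<perp>\<close>.
\<close>

lemma cscale_eq_scaleC: "cscale c v = c *s v"
  by (simp add: cscale_def vector_scalar_mult_def)

lemma clor_add_left: "clor (x + y) z = clor x z + clor y z" by (simp add: clor_def algebra_simps)
lemma clor_add_right: "clor z (x + y) = clor z x + clor z y" by (simp add: clor_def algebra_simps)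
lemma clor_diff_left: "clor (x - y) z = clor x z - clor y z" by (simp add: clor_def algebra_simps)
lemma clor_diff_right: "clor z (x - y) = clor z x - clor z y" by (simp add: clor_def algebra_simps)
lemma clor_scale_left: "clor (c *s x) z = c * clor x z" by (simp add: clor_def algebra_simps)
lemma clor_scale_right: "clor z (c *s x) = c * clor z x" by (simp add: clor_def algebra_simps)
lemma clor_commute: "clor x y = clor y x" by (simp add: clor_def algebra_simps)
lemma clor_zero_left [simp]: "clor 0 x = 0" by (simp add: clor_def)
lemma clor_zero_right [simp]: "clor x 0 = 0" by (simp add: clor_def)

lemmas clor_bilinear =
  clor_add_left clor_add_right clor_diff_left clor_diff_right clor_scale_left clor_scale_right

lemma bounded_bilinear_clor: "bounded_bilinear clor"
proof
  fix a a' b :: "complex^5" and r :: real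
  show "clor (a + a') b = clor a b + clor a' b" "clor b (a + a') = clor b a + clor b a'"
    by (rule clor_add_left, rule clor_add_right)
  show "clor (r *\<^sub>R a) b = r *\<^sub>R clor a b" "clor a (r *\<^sub>R b) = r *\<^sub>R clor a b"
    unfolding clor_def vector_scaleR_component by (simp_all add: algebra_simps scaleR_conv_of_real)
next
  show "\<exists>K. \<forall>x y. norm (clor x y) \<le> norm x * norm y * K"
  proof (intro exI allI)
    fix x y :: "complex^5"
    have entry: "norm (x$i * y$i) \<le> norm x * norm y" for i
      using mult_mono[OF Finite_Cartesian_Product.norm_nth_le[of x i] Finite_Cartesian_Product.norm_nth_le[of y i]]
      by (simp add: norm_mult)
    have "norm (clor x y) \<le> norm (x$0*y$0) + norm (x$1*y$1) + norm (x$2*y$2) + norm (x$3*y$3) + norm (x$4*y$4)"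
      unfolding clor_def
      by (intro order.trans[OF norm_triangle_ineq4] order.trans[OF norm_triangle_ineq] add_mono order_refl)
    also have "\<dots> \<le> norm x * norm y * 5"
      using entry[of 0] entry[of 1] entry[of 2] entry[of 3] entry[of 4] by simp
    finally show "norm (clor x y) \<le> norm x * norm y * 5" .
  qed
qed

lemma clor_cplx: "clor (cplx a) (cplx b) = complex_of_real (lor a b)"
  by (simp add: clor_def lor_def cplx_def)

lemma lor_add_left: "lor (x + y) z = lor x z + lor y z" by (simp add: lor_def algebra_simps)
lemma lor_add_right: "lor z (x + y) = lor z x + lor z y" by (simp add: lor_def algebra_simps)
lemma lor_scaleR_left: "lor (r *\<^sub>R x) z = r * lor x z" by (simp add: lor_def algebra_simps)
lemma lor_scaleR_right: "lor z (r *\<^sub>R x) = r * lor z x" by (simp add: lor_def algebra_simps)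
lemma lor_commute: "lor x y = lor y x" by (simp add: lor_def algebra_simps)

lemmas lor_bilinear = lor_add_left lor_add_right lor_scaleR_left lor_scaleR_right

lemma cplx_add: "cplx (a + b) = cplx a + cplx b"
  by (simp add: cplx_def vec_eq_iff)

lemma cplx_scaleR: "cplx (r *\<^sub>R a) = complex_of_real r *s cplx a"
  by (simp add: cplx_def vec_eq_iff)

lemma bounded_linear_cplx: "bounded_linear cplx"
  unfolding linear_conv_bounded_linear[symmetric]
  by (rule linearI) (simp_all add: cplx_def vec_eq_iff, simp add: scaleR_conv_of_real)

definition cconj :: "complex^5 \<Rightarrow> complex^5" where
  "cconj v = (\<chi> i. cnj (v$i))"

lemma cconj_cconj [simp]: "cconj (cconj a) = a" by (simp add: cconj_def vec_eq_iff)
lemma cconj_cplx [simp]: "cconj (cplx a) = cplx a" by (simp add: cconj_def cplx_def vec_eq_iff)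
lemma clor_cconj: "clor (cconj x) (cconj y) = cnj (clor x y)" by (simp add: cconj_def clor_def)

lemma clor_cconj_cplx: "clor (cconj x) (cplx a) = cnj (clor x (cplx a))"
  by (metis clor_cconj cconj_cplx)

lemma pdx_has_derivative:
  assumes "(g has_derivative g') (at p)"
  shows "pdx g p = g' 1"
proof -
  have "((\<lambda>t::real. p + complex_of_real t) has_derivative complex_of_real) (at 0)"
    by (auto intro!: derivative_eq_intros)
  from has_derivative_compose[OF this, of g g'] assms
  have "((\<lambda>t. g (p + complex_of_real t)) has_derivative (\<lambda>t. g' (complex_of_real t))) (at 0)"
    by (simp add: o_def)
  moreover have "g' (complex_of_real t) = t *\<^sub>R g' 1" for t
    using linear_scale[OF has_derivative_linear[OF assms], of t 1] by (simp add: scaleR_conv_of_real)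
  ultimately have "((\<lambda>t. g (p + complex_of_real t)) has_vector_derivative g' 1) (at 0)"
    unfolding has_vector_derivative_def by simp
  then show ?thesis unfolding pdx_def by (rule vector_derivative_at)
qed

lemma pdy_has_derivative:
  assumes "(g has_derivative g') (at p)"
  shows "pdy g p = g' \<i>"
proof -
  have "((\<lambda>t::real. p + \<i> * complex_of_real t) has_derivative (\<lambda>t. \<i> * complex_of_real t)) (at 0)"
    by (auto intro!: derivative_eq_intros)
  from has_derivative_compose[OF this, of g g'] assms
  have "((\<lambda>t. g (p + \<i> * complex_of_real t)) has_derivative (\<lambda>t. g' (\<i> * complex_of_real t))) (at 0)"
    by (simp add: o_def)
  moreover have "g' (\<i> * complex_of_real t) = t *\<^sub>R g' \<i>" for t
    using linear_scale[OF has_derivative_linear[OF assms], of t \<i>] by (simp add: scaleR_conv_of_real mult.commute)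
  ultimately have "((\<lambda>t. g (p + \<i> * complex_of_real t)) has_vector_derivative g' \<i>) (at 0)"
    unfolding has_vector_derivative_def by simp
  then show ?thesis unfolding pdy_def by (rule vector_derivative_at)
qed

lemma pdx_eq_dz_add_dzb: "pdx G p = dz G p + dzb G p"
  by (simp add: dz_def dzb_def cscale_def vec_eq_iff field_simps)

lemma pdy_eq_dz_diff_dzb: "pdy G p = \<i> *s (dz G p - dzb G p)"
  by (simp add: dz_def dzb_def cscale_def vec_eq_iff field_simps)

lemma dz_clor_const:
  fixes A B :: "complex \<Rightarrow> complex^5"
  assumes "open U" "p \<in> U" "\<forall>q\<in>U. clor (A q) (B q) = k"
    and "A differentiable (at p)" "B differentiable (at p)"
  shows "clor (dz A p) (B p) + clor (A p) (dz B p) = 0"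
    and "clor (dzb A p) (B p) + clor (A p) (dzb B p) = 0"
proof -
  obtain A' where A: "(A has_derivative A') (at p)" using assms(4) by (auto simp: differentiable_def)
  obtain B' where B: "(B has_derivative B') (at p)" using assms(5) by (auto simp: differentiable_def)
  have "((\<lambda>q. clor (A q) (B q)) has_derivative (\<lambda>h. clor (A p) (B' h) + clor (A' h) (B p))) (at p)"
    using bounded_bilinear.FDERIV[OF bounded_bilinear_clor A B] .
  moreover have "((\<lambda>q. clor (A q) (B q)) has_derivative (\<lambda>_. 0)) (at p)"
    by (rule has_derivative_transform_within_open[OF has_derivative_const assms(1,2)]) (use assms(3) in auto)
  ultimately have D0: "(\<lambda>h. clor (A p) (B' h) + clor (A' h) (B p)) = (\<lambda>_. 0)"
    by (rule has_derivative_unique)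
  have "clor (A p) (B' h) = - clor (A' h) (B p)" for h
    using fun_cong[OF D0, of h] by (simp add: eq_neg_iff_add_eq_0)
  then show "clor (dz A p) (B p) + clor (A p) (dz B p) = 0"
    and "clor (dzb A p) (B p) + clor (A p) (dzb B p) = 0"
    unfolding dz_def dzb_def cscale_eq_scaleC pdx_has_derivative[OF A] pdx_has_derivative[OF B]
      pdy_has_derivative[OF A] pdy_has_derivative[OF B]
    by (simp_all add: clor_bilinear algebra_simps)
qed

lemma cplx_comp_derivatives:
  fixes g :: "complex \<Rightarrow> real^5"
  assumes "g differentiable (at p)"
  shows "(cplx \<circ> g) differentiable (at p)"
    and "pdx (cplx \<circ> g) p = cplx (pdx g p)" "pdy (cplx \<circ> g) p = cplx (pdy g p)"
proof -
  obtain g' where G: "(g has_derivative g') (at p)" using assms by (auto simp: differentiable_def)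
  have D: "((cplx \<circ> g) has_derivative (cplx \<circ> g')) (at p)"
    using has_derivative_compose[OF G bounded_linear.has_derivative[OF bounded_linear_cplx has_derivative_ident]]
    by (simp add: o_def)
  then show "(cplx \<circ> g) differentiable (at p)" by (auto simp: differentiable_def)
  show "pdx (cplx \<circ> g) p = cplx (pdx g p)" "pdy (cplx \<circ> g) p = cplx (pdy g p)"
    using pdx_has_derivative[OF D] pdx_has_derivative[OF G]
      pdy_has_derivative[OF D] pdy_has_derivative[OF G] by simp_all
qed

lemma dzb_cplx_comp:
  fixes g :: "complex \<Rightarrow> real^5"
  assumes "g differentiable (at p)"
  shows "dzb (cplx \<circ> g) p = cconj (dz (cplx \<circ> g) p)"
  unfolding dz_def dzb_def cplx_comp_derivatives[OF assms] cscale_def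
  by (simp add: cconj_def cplx_def vec_eq_iff)

lemma differentiable_dz_cplx_comp:
  fixes g :: "complex \<Rightarrow> real^5"
  assumes "open U" "p \<in> U" "\<forall>q\<in>U. g differentiable (at q)"
    and "pdx g differentiable (at p)" "pdy g differentiable (at p)"
  shows "dz (cplx \<circ> g) differentiable (at p)"
proof -
  let ?M = "\<lambda>c v. cscale c (cplx v)"
  have lin: "bounded_linear (?M c)" for c
    unfolding linear_conv_bounded_linear[symmetric]
    by (rule linearI) (simp_all add: cplx_def cscale_def vec_eq_iff algebra_simps, simp add: scaleR_conv_of_real)
  have "(\<lambda>q. ?M (1/2) (pdx g q) + ?M (- \<i>/2) (pdy g q)) differentiable (at p)"
    using differentiable_chain_at[OF assms(4) bounded_linear_imp_differentiable[OF lin]]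
      differentiable_chain_at[OF assms(5) bounded_linear_imp_differentiable[OF lin]]
    by (simp add: o_def)
  then obtain D where D: "((\<lambda>q. ?M (1/2) (pdx g q) + ?M (- \<i>/2) (pdy g q)) has_derivative D) (at p)"
    by (auto simp: differentiable_def)
  have "(dz (cplx \<circ> g) has_derivative D) (at p)"
  proof (rule has_derivative_transform_within_open[OF D assms(1,2)])
    fix q assume "q \<in> U"
    then show "?M (1/2) (pdx g q) + ?M (- \<i>/2) (pdy g q) = dz (cplx \<circ> g) q"
      unfolding dz_def cplx_comp_derivatives[OF assms(3)[rule_format, OF \<open>q \<in> U\<close>]]
      by (simp add: cscale_def cplx_def vec_eq_iff algebra_simps)
  qed
  then show ?thesis by (auto simp: differentiable_def)
qed

lemma smooth_on_differentiable:
  assumes "smooth_on U g" "p \<in> U"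
  shows "g differentiable (at p)" "pdx g differentiable (at p)" "pdy g differentiable (at p)"
proof -
  have "Ck 2 U g" using assms(1) unfolding smooth_on_def by blast
  then show "g differentiable (at p)" "pdx g differentiable (at p)" "pdy g differentiable (at p)"
    using assms(2) by (simp_all add: numeral_2_eq_2)
qed

lemma span_five_independent:
  fixes v0 v1 v2 v3 v4 w :: "complex^5"
  assumes indep: "\<And>a b c d e. a *s v0 + b *s v1 + c *s v2 + d *s v3 + e *s v4 = 0
                    \<Longrightarrow> a = 0 \<and> b = 0 \<and> c = 0 \<and> d = 0 \<and> e = 0"
  shows "\<exists>a b c d e. w = a *s v0 + b *s v1 + c *s v2 + d *s v3 + e *s v4"
proof -
  have distinct: "v0 \<noteq> v1" "v0 \<noteq> v2" "v0 \<noteq> v3" "v0 \<noteq> v4" "v1 \<noteq> v2"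
    "v1 \<noteq> v3" "v1 \<noteq> v4" "v2 \<noteq> v3" "v2 \<noteq> v4" "v3 \<noteq> v4"
    using indep[of 1 "-1" 0 0 0] indep[of 1 0 "-1" 0 0] indep[of 1 0 0 "-1" 0] indep[of 1 0 0 0 "-1"]
      indep[of 0 1 "-1" 0 0] indep[of 0 1 0 "-1" 0] indep[of 0 1 0 0 "-1"] indep[of 0 0 1 "-1" 0]
      indep[of 0 0 1 0 "-1"] indep[of 0 0 0 1 "-1"]
    by auto
  let ?B = "{v0, v1, v2, v3, v4}"
  have sum_B: "(\<Sum>v\<in>?B. u v *s v) = u v0 *s v0 + u v1 *s v1 + u v2 *s v2 + u v3 *s v3 + u v4 *s v4" for u
    using distinct by (simp add: add.assoc)
  have "vec.independent ?B"
    unfolding vec.independent_explicit using indep by (simp add: sum_B)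
  moreover have "vec.dim (UNIV :: (complex^5) set) \<le> card ?B"
    using distinct vec_dim_card[where 'a=complex and 'n=5] by simp
  ultimately have "UNIV \<subseteq> vec.span ?B"
    using vec.card_ge_dim_independent[of ?B UNIV] by auto
  then obtain u where "w = (\<Sum>v\<in>?B. u v *s v)"
    using vec.span_finite[of ?B] by auto
  then show ?thesis unfolding sum_B by blast
qed

lemma clor_frame_expansion:
  fixes F Fz Fzb N1 N2 w w' :: "complex^5" and e :: complex
  assumes "e \<noteq> 0"
    and "clor F F = 1" "clor F Fz = 0" "clor F Fzb = 0" "clor F N1 = 0" "clor F N2 = 0"
    and "clor Fz Fz = 0" "clor Fzb Fzb = 0" "clor Fz Fzb = e"
    and "clor Fz N1 = 0" "clor Fz N2 = 0" "clor Fzb N1 = 0" "clor Fzb N2 = 0"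
    and "clor N1 N1 = 1" "clor N2 N2 = -1" "clor N1 N2 = 0"
  shows "clor w w' = clor w F * clor w' F + (clor w Fzb * clor w' Fz + clor w Fz * clor w' Fzb) / e
                     + clor w N1 * clor w' N1 - clor w N2 * clor w' N2"
proof -
  note gram = assms(2-) assms(3-)[THEN trans[OF clor_commute]]
  have coords: "clor v F = a" "clor v Fzb = b * e" "clor v Fz = c * e" "clor v N1 = d" "clor v N2 = - h"
    if "v = a *s F + b *s Fz + c *s Fzb + d *s N1 + h *s N2" for v a b c d h
    using that gram by (simp_all add: clor_bilinear)
  have "a = 0 \<and> b = 0 \<and> c = 0 \<and> d = 0 \<and> h = 0"
    if "a *s F + b *s Fz + c *s Fzb + d *s N1 + h *s N2 = 0" for a b c d h
    using coords[OF that[symmetric]] \<open>e \<noteq> 0\<close> by simp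
  then obtain a b c d h where w: "w = a *s F + b *s Fz + c *s Fzb + d *s N1 + h *s N2"
    using span_five_independent by metis
  have "clor w w' = a * clor F w' + b * clor Fz w' + c * clor Fzb w' + d * clor N1 w' + h * clor N2 w'"
    unfolding w by (simp add: clor_bilinear)
  then show ?thesis
    using coords[OF w] \<open>e \<noteq> 0\<close> by (simp add: clor_commute[of _ w'] field_simps)
qed

lemma span_null_frame_eq_orthogonal:
  fixes F X Y Z T :: "complex^5"
  assumes "clor F F = 1" "clor F X = 0" "clor F Y = 0" "clor F Z = 0" "clor F T = 0"
    and "clor X X = 0" "clor X Y = 0" "clor X Z = 0" "clor X T = - k"
    and "clor Y Y = 0" "clor Z Z = 0" "clor Y Z = k" "k \<noteq> 0"
  shows "{v. \<exists>a b c d. v = a *s X + b *s Y + c *s Z + d *s T} = {v. clor F v = 0}"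
proof -
  note gram = assms(1-12) assms(2-12)[THEN trans[OF clor_commute]]
  have "a = 0 \<and> b = 0 \<and> c = 0 \<and> d = 0 \<and> e = 0"
    if v: "a *s X + b *s Y + c *s Z + d *s T + e *s F = 0" for a b c d e
  proof -
    let ?v = "a *s X + b *s Y + c *s Z + d *s T + e *s F"
    have "clor F ?v = e" using gram by (simp add: clor_bilinear)
    then have e: "e = 0" unfolding v by simp
    have "clor X ?v = - d * k" using gram e by (simp add: clor_bilinear)
    then have d: "d = 0" unfolding v using \<open>k \<noteq> 0\<close> by simp
    have "clor Y ?v = c * k" using gram e d by (simp add: clor_bilinear)
    then have c: "c = 0" unfolding v using \<open>k \<noteq> 0\<close> by simp
    have "clor Z ?v = b * k" using gram e d c by (simp add: clor_bilinear)
    then have b: "b = 0" unfolding v using \<open>k \<noteq> 0\<close> by simp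
    have "clor T ?v = - a * k" using gram e d c b by (simp add: clor_bilinear)
    then have "a = 0" unfolding v using \<open>k \<noteq> 0\<close> by simp
    with b c d e show ?thesis by simp
  qed
  then have span: "\<exists>a b c d e. v = a *s X + b *s Y + c *s Z + d *s T + e *s F" for v
    by (rule span_five_independent)
  show ?thesis
  proof (intro set_eqI iffI)
    fix v assume "v \<in> {v. \<exists>a b c d. v = a *s X + b *s Y + c *s Z + d *s T}"
    then show "v \<in> {v. clor F v = 0}" using gram by (auto simp: clor_bilinear)
  next
    fix v assume "v \<in> {v. clor F v = 0}"
    moreover obtain a b c d e where v: "v = a *s X + b *s Y + c *s Z + d *s T + e *s F"
      using span by blast
    moreover have "clor F v = e" unfolding v using gram by (simp add: clor_bilinear)
    ultimately show "v \<in> {v. \<exists>a b c d. v = a *s X + b *s Y + c *s Z + d *s T}" by auto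
  qed
qed

section \<open>Marginally trapped immersions and lifts of the null Gauss map\<close>

locale marginally_trapped_immersion =
  fixes U :: "complex set"
    and f N1 N2 H :: "complex \<Rightarrow> real^5"
    and u h :: "complex \<Rightarrow> real"
  assumes open_U: "open U"
    and smooth_f: "smooth_on U f"
    and sphere: "p \<in> U \<Longrightarrow> lor (f p) (f p) = 1"
    and conformal: "p \<in> U \<Longrightarrow> clor (dz (cplx \<circ> f) p) (dz (cplx \<circ> f) p) = 0"
    and conformal_factor:
      "p \<in> U \<Longrightarrow> clor (dz (cplx \<circ> f) p) (dzb (cplx \<circ> f) p) = complex_of_real (exp (2 * u p))"
    and normal_N1:
      "p \<in> U \<Longrightarrow> lor (N1 p) (f p) = 0 \<and> lor (N1 p) (pdx f p) = 0 \<and> lor (N1 p) (pdy f p) = 0"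
    and normal_N2:
      "p \<in> U \<Longrightarrow> lor (N2 p) (f p) = 0 \<and> lor (N2 p) (pdx f p) = 0 \<and> lor (N2 p) (pdy f p) = 0"
    and orthonormal_N:
      "p \<in> U \<Longrightarrow> lor (N1 p) (N1 p) = 1 \<and> lor (N2 p) (N2 p) = -1 \<and> lor (N1 p) (N2 p) = 0"
    and mean_curvature:
      "p \<in> U \<Longrightarrow> dzb (dz (cplx \<circ> f)) p = cplx (- exp (2 * u p) *\<^sub>R f p + exp (2 * u p) *\<^sub>R H p)"
    and mean_curvature_null: "p \<in> U \<Longrightarrow> H p = h p *\<^sub>R (N1 p + N2 p)"
    and nonisotropic:
      "p \<in> U \<Longrightarrow> clor (dz (dz (cplx \<circ> f)) p) (dz (dz (cplx \<circ> f)) p) \<noteq> 0"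
begin

abbreviation F :: "complex \<Rightarrow> complex^5" where
  "F \<equiv> cplx \<circ> f"

lemma F_differentiable: "p \<in> U \<Longrightarrow> F differentiable (at p)"
  using smooth_on_differentiable(1)[OF smooth_f] cplx_comp_derivatives(1) by blast

lemma dz_F_differentiable: "p \<in> U \<Longrightarrow> dz F differentiable (at p)"
  using differentiable_dz_cplx_comp[OF open_U] smooth_on_differentiable[OF smooth_f] by blast

lemma dzb_F: "p \<in> U \<Longrightarrow> dzb F p = cconj (dz F p)"
  using dzb_cplx_comp smooth_on_differentiable(1)[OF smooth_f] by blast

lemma clor_F_F: "p \<in> U \<Longrightarrow> clor (F p) (F p) = 1"
  using sphere by (simp add: clor_cplx)

lemma clor_F_dz_F:
  assumes "p \<in> U"
  shows "clor (F p) (dz F p) = 0"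
  using dz_clor_const(1)[OF open_U assms ballI[OF clor_F_F] F_differentiable[OF assms] F_differentiable[OF assms]]
  by (simp add: clor_commute[of "dz F p"])

lemma clor_F_normal:
  assumes "p \<in> U" "lor n (f p) = 0 \<and> lor n (pdx f p) = 0 \<and> lor n (pdy f p) = 0"
  shows "clor (F p) (cplx n) = 0" "clor (dz F p) (cplx n) = 0" "clor (dzb F p) (cplx n) = 0"
proof -
  have "dz F p = (1/2) *s (cplx (pdx f p) - \<i> *s cplx (pdy f p))"
    unfolding dz_def cplx_comp_derivatives(2,3)[OF smooth_on_differentiable(1)[OF smooth_f assms(1)]]
      cscale_eq_scaleC by simp
  then show "clor (F p) (cplx n) = 0" "clor (dz F p) (cplx n) = 0" "clor (dzb F p) (cplx n) = 0"
    using assms by (simp_all add: dzb_F clor_cconj_cplx clor_bilinear clor_cplx lor_def mult.commute)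
qed

lemma F_frame_expansion:
  assumes "p \<in> U"
  shows "clor w w' = clor w (F p) * clor w' (F p)
           + (clor w (dzb F p) * clor w' (dz F p) + clor w (dz F p) * clor w' (dzb F p)) / exp (2 * u p)
           + clor w (cplx (N1 p)) * clor w' (cplx (N1 p)) - clor w (cplx (N2 p)) * clor w' (cplx (N2 p))"
proof (rule clor_frame_expansion)
  show "clor (F p) (cplx (N1 p)) = 0" "clor (dz F p) (cplx (N1 p)) = 0" "clor (dzb F p) (cplx (N1 p)) = 0"
    using clor_F_normal[OF assms normal_N1[OF assms]] by simp_all
  show "clor (F p) (cplx (N2 p)) = 0" "clor (dz F p) (cplx (N2 p)) = 0" "clor (dzb F p) (cplx (N2 p)) = 0"
    using clor_F_normal[OF assms normal_N2[OF assms]] by simp_all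
  show "clor (F p) (F p) = 1" "clor (F p) (dz F p) = 0" "clor (F p) (dzb F p) = 0"
    using clor_F_F clor_F_dz_F clor_cconj[of "F p" "dz F p"] assms by (simp_all add: dzb_F)
  show "clor (dz F p) (dz F p) = 0" "clor (dzb F p) (dzb F p) = 0"
    "clor (dz F p) (dzb F p) = complex_of_real (exp (2 * u p))"
    using conformal conformal_factor clor_cconj[of "dz F p" "dz F p"] assms by (simp_all add: dzb_F)
  show "clor (cplx (N1 p)) (cplx (N1 p)) = 1" "clor (cplx (N2 p)) (cplx (N2 p)) = -1"
    "clor (cplx (N1 p)) (cplx (N2 p)) = 0"
    using orthonormal_N[OF assms] by (simp_all add: clor_cplx)
qed simp

lemma clor_dz_dz_F:
  assumes "p \<in> U"
  shows "clor (F p) (dz (dz F) p) = 0" "clor (dz (dz F) p) (dz F p) = 0"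
proof -
  show "clor (F p) (dz (dz F) p) = 0"
    using dz_clor_const(1)[OF open_U assms ballI[OF clor_F_dz_F] F_differentiable[OF assms]
        dz_F_differentiable[OF assms]] conformal[OF assms]
    by simp
  show "clor (dz (dz F) p) (dz F p) = 0"
    using dz_clor_const(1)[OF open_U assms ballI[OF conformal] dz_F_differentiable[OF assms]
        dz_F_differentiable[OF assms]]
    by (simp add: clor_commute[of "dz F p"])
qed

text \<open>With \<open>\<xi>\<^sub>1 = \<langle>f\<^sub>z\<^sub>z, N\<^sub>1\<rangle>\<close> and \<open>\<xi>\<^sub>2 = -\<langle>f\<^sub>z\<^sub>z, N\<^sub>2\<rangle>\<close> the frame expansion gives
  \<open>\<langle>f\<^sub>z\<^sub>z, f\<^sub>z\<^sub>z\<rangle> = (\<xi>\<^sub>1 - \<xi>\<^sub>2)(\<xi>\<^sub>1 + \<xi>\<^sub>2)\<close>, so non-isotropy forces \<open>\<xi>\<^sub>1 \<noteq> \<xi>\<^sub>2\<close>.\<close>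
lemma clor_dz_dz_F_null_normal:
  assumes "p \<in> U"
  shows "clor (dz (dz F) p) (cplx (N1 p + N2 p)) \<noteq> 0"
proof -
  define a where "a = clor (dz (dz F) p) (cplx (N1 p))"
  define b where "b = clor (dz (dz F) p) (cplx (N2 p))"
  have "clor (dz (dz F) p) (F p) = 0"
    using clor_dz_dz_F(1)[OF assms] by (simp add: clor_commute)
  then have "clor (dz (dz F) p) (dz (dz F) p) = (a - b) * (a + b)"
    using F_frame_expansion[OF assms, of "dz (dz F) p" "dz (dz F) p"] clor_dz_dz_F(2)[OF assms]
    unfolding a_def b_def by (simp add: algebra_simps)
  then have "a + b \<noteq> 0" using nonisotropic[OF assms] by auto
  then show ?thesis
    unfolding a_def b_def by (simp add: cplx_add clor_bilinear)
qed

lemma clor_null_normal_dzb_dz_F: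
  assumes "p \<in> U"
  shows "clor (cplx (N1 p + N2 p)) (dzb (dz F) p) = 0"
proof -
  have "lor (N1 p + N2 p) (H p) = 0" "lor (N1 p + N2 p) (f p) = 0"
    using normal_N1[OF assms] normal_N2[OF assms] orthonormal_N[OF assms]
    by (simp_all add: mean_curvature_null[OF assms] lor_bilinear lor_commute[of "N2 p" "N1 p"])
  then show ?thesis
    by (simp only: mean_curvature[OF assms] clor_cplx lor_add_right lor_scaleR_right) simp
qed

context
  fixes X :: "complex \<Rightarrow> real^5"
  assumes lift: "is_lift U N1 N2 X"
begin

abbreviation XC :: "complex \<Rightarrow> complex^5" where
  "XC \<equiv> cplx \<circ> X"

lemma lift_differentiable:
  assumes "p \<in> U"
  shows "XC differentiable (at p)" "dz XC differentiable (at p)" "dzb XC p = cconj (dz XC p)"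
proof -
  have smooth_X: "smooth_on U X" using lift unfolding is_lift_def by blast
  note X_diff = smooth_on_differentiable[OF smooth_X]
  show "XC differentiable (at p)" using cplx_comp_derivatives(1)[OF X_diff(1)[OF assms]] .
  show "dz XC differentiable (at p)" using differentiable_dz_cplx_comp[OF open_U assms] X_diff assms by blast
  show "dzb XC p = cconj (dz XC p)" using dzb_cplx_comp[OF X_diff(1)[OF assms]] .
qed

lemma lift_null_normal:
  assumes "p \<in> U"
  obtains c :: real where "c \<noteq> 0" "cplx (X p) = complex_of_real c *s cplx (N1 p + N2 p)"
proof -
  obtain c where "X p = c *\<^sub>R (N1 p + N2 p)" "X p \<noteq> 0" using lift assms unfolding is_lift_def by blast
  then show ?thesis using that by (auto simp: cplx_scaleR)
qed

lemma clor_lift_vanish: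
  assumes "p \<in> U"
  shows "clor (F p) (XC p) = 0" "clor (XC p) (XC p) = 0" "clor (XC p) (dz F p) = 0"
proof -
  obtain c where X: "cplx (X p) = complex_of_real c *s cplx (N1 p + N2 p)"
    using lift_null_normal[OF assms] .
  have "lor (N1 p + N2 p) (f p) = 0 \<and> lor (N1 p + N2 p) (pdx f p) = 0 \<and> lor (N1 p + N2 p) (pdy f p) = 0"
    using normal_N1[OF assms] normal_N2[OF assms] by (simp add: lor_bilinear)
  note normal_null = clor_F_normal(1,2)[OF assms this]
  show "clor (F p) (XC p) = 0" "clor (XC p) (dz F p) = 0"
    using normal_null by (simp_all add: X clor_bilinear clor_commute[of "cplx _" "dz F p"])
  show "clor (XC p) (XC p) = 0" using lift assms unfolding is_lift_def by (simp add: clor_cplx)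
qed

lemma clor_F_dz_lift:
  assumes "p \<in> U"
  shows "clor (F p) (dz XC p) = 0" "clor (F p) (dzb XC p) = 0"
proof -
  show "clor (F p) (dz XC p) = 0"
    using dz_clor_const(1)[OF open_U assms ballI[OF clor_lift_vanish(1)] F_differentiable[OF assms]
        lift_differentiable(1)[OF assms]] clor_lift_vanish(3)[OF assms]
    by (simp add: clor_commute[of "dz F p"])
  then show "clor (F p) (dzb XC p) = 0"
    using clor_cconj[of "F p" "dz XC p"] by (simp add: lift_differentiable(3)[OF assms])
qed

lemma lift_envelope:
  assumes "p \<in> U"
  shows "lor (f p) (X p) = 0 \<and> lor (f p) (pdx X p) = 0 \<and> lor (f p) (pdy X p) = 0"
proof -
  have X_diff: "X differentiable (at p)"
    using lift assms unfolding is_lift_def by (blast intro: smooth_on_differentiable(1))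
  have "clor (F p) (pdx XC p) = 0" "clor (F p) (pdy XC p) = 0"
    using clor_F_dz_lift[OF assms] by (simp_all add: pdx_eq_dz_add_dzb pdy_eq_dz_diff_dzb clor_bilinear)
  then show ?thesis
    using clor_lift_vanish(1)[OF assms] by (simp add: cplx_comp_derivatives(2,3)[OF X_diff] clor_cplx)
qed

lemma clor_lift_dz_lift:
  assumes "p \<in> U"
  shows "clor (XC p) (dz XC p) = 0" "clor (XC p) (dzb XC p) = 0"
  using dz_clor_const[OF open_U assms ballI[OF clor_lift_vanish(2)] lift_differentiable(1)[OF assms]
      lift_differentiable(1)[OF assms]]
  by (simp_all add: clor_commute[of "dz XC p"] clor_commute[of "dzb XC p"])

lemma clor_dz_lift_null_normal:
  assumes "p \<in> U"
  shows "clor (dz XC p) (cplx (N1 p + N2 p)) = 0" "clor (dzb XC p) (cplx (N1 p + N2 p)) = 0"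
proof -
  obtain c where "c \<noteq> 0" and X: "cplx (X p) = complex_of_real c *s cplx (N1 p + N2 p)"
    using lift_null_normal[OF assms] .
  have "clor (dz XC p) (XC p) = 0"
    using clor_lift_dz_lift(1)[OF assms] by (simp add: clor_commute)
  then show "clor (dz XC p) (cplx (N1 p + N2 p)) = 0"
    using \<open>c \<noteq> 0\<close> by (simp add: X clor_bilinear)
  then show "clor (dzb XC p) (cplx (N1 p + N2 p)) = 0"
    by (simp add: lift_differentiable(3)[OF assms] clor_cconj_cplx)
qed

text \<open>Here the mean curvature equation enters: \<open>f\<^sub>z\<^sub>z\<^sub>b\<^sub>a\<^sub>r\<close> lies in the span of \<open>f\<close> and \<open>N\<^sub>1 + N\<^sub>2\<close>.\<close>
lemma clor_dzb_lift_dz_F: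
  assumes "p \<in> U"
  shows "clor (dzb XC p) (dz F p) = 0"
proof -
  obtain c where X: "cplx (X p) = complex_of_real c *s cplx (N1 p + N2 p)"
    using lift_null_normal[OF assms] .
  have "clor (XC p) (dzb (dz F) p) = 0"
    using clor_null_normal_dzb_dz_F[OF assms] by (simp add: X clor_bilinear)
  then show ?thesis
    using dz_clor_const(2)[OF open_U assms ballI[OF clor_lift_vanish(3)] lift_differentiable(1)[OF assms]
        dz_F_differentiable[OF assms]]
    by simp
qed

lemma clor_F_dzb_dz_lift:
  assumes "p \<in> U"
  shows "clor (F p) (dzb (dz XC) p) = 0"
proof -
  have "clor (dzb F p) (dz XC p) = clor (cconj (dz F p)) (cconj (dzb XC p))"
    by (simp add: dzb_F[OF assms] lift_differentiable(3)[OF assms])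
  also have "\<dots> = cnj (clor (dz F p) (dzb XC p))"
    by (rule clor_cconj)
  finally have "clor (dzb F p) (dz XC p) = 0"
    using clor_dzb_lift_dz_F[OF assms] by (simp add: clor_commute[of "dz F p"])
  then show ?thesis
    using dz_clor_const(2)[OF open_U assms ballI[OF clor_F_dz_lift(1)] F_differentiable[OF assms]
        lift_differentiable(2)[OF assms]]
    by simp
qed

text \<open>Non-isotropy enters here, through \<open>\<langle>X\<^sub>z, f\<^sub>z\<rangle> = -\<langle>X, f\<^sub>z\<^sub>z\<rangle>\<close>.\<close>
lemma clor_dz_lift_dz_F_nonzero:
  assumes "p \<in> U"
  shows "clor (dz XC p) (dz F p) \<noteq> 0"
proof -
  obtain c where "c \<noteq> 0" and X: "cplx (X p) = complex_of_real c *s cplx (N1 p + N2 p)"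
    using lift_null_normal[OF assms] .
  have "clor (XC p) (dz (dz F) p) \<noteq> 0"
    using clor_dz_dz_F_null_normal[OF assms] \<open>c \<noteq> 0\<close>
    by (simp add: X clor_bilinear clor_commute[of "cplx (N1 p + N2 p)"])
  then show ?thesis
    using dz_clor_const(1)[OF open_U assms ballI[OF clor_lift_vanish(3)] lift_differentiable(1)[OF assms]
        dz_F_differentiable[OF assms]]
    by (simp add: add_eq_0_iff)
qed

lemma clor_dz_lift_dz_lift:
  assumes p: "p \<in> U"
  defines "\<kappa> \<equiv> clor (dz XC p) (dz F p)"
  shows "clor (dz XC p) (dz XC p) = 0" "clor (dzb XC p) (dzb XC p) = 0"
    and "clor (dz XC p) (dzb XC p) = \<kappa> * cnj \<kappa> / exp (2 * u p)"
proof -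
  note expansion = F_frame_expansion[OF p]
  have conj: "dzb XC p = cconj (dz XC p)" "dzb F p = cconj (dz F p)" "cconj (F p) = F p"
    using lift_differentiable(3) dzb_F p by simp_all
  have "clor (dz XC p) (F p) = 0" "clor (dzb XC p) (F p) = 0"
    using clor_F_dz_lift[OF p] by (simp_all add: clor_commute[of "cplx (f p)"])
  moreover have "clor (dz XC p) (dzb F p) = 0"
    using clor_cconj[of "dzb XC p" "dz F p"] clor_dzb_lift_dz_F[OF p] conj by simp
  moreover have "clor (dzb XC p) (dzb F p) = cnj \<kappa>"
    using clor_cconj[of "dz XC p" "dz F p"] conj unfolding \<kappa>_def by simp
  moreover have "clor w (cplx (N2 p)) = - clor w (cplx (N1 p))"
    if "w = dz XC p \<or> w = dzb XC p" for w
    using clor_dz_lift_null_normal[OF p] that by (auto simp: cplx_add clor_bilinear add_eq_0_iff)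
  ultimately show "clor (dz XC p) (dz XC p) = 0" "clor (dzb XC p) (dzb XC p) = 0"
    and "clor (dz XC p) (dzb XC p) = \<kappa> * cnj \<kappa> / exp (2 * u p)"
    using expansion[of "dz XC p" "dz XC p"] expansion[of "dzb XC p" "dzb XC p"]
      expansion[of "dz XC p" "dzb XC p"] clor_dzb_lift_dz_F[OF p]
    unfolding \<kappa>_def by simp_all
qed

lemma lift_central_sphere_congruence:
  assumes "p \<in> U"
  shows "{v. \<exists>a b c d. v = a *s XC p + b *s dz XC p + c *s dzb XC p + d *s dzb (dz XC) p}
         = {v. clor (F p) v = 0}"
proof -
  define k where "k = clor (dz XC p) (dzb XC p)"
  have "k \<noteq> 0"
    using clor_dz_lift_dz_lift(3)[OF assms] clor_dz_lift_dz_F_nonzero[OF assms] unfolding k_def by simp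
  moreover have "clor (XC p) (dzb (dz XC) p) = - k"
    using dz_clor_const(2)[OF open_U assms ballI[OF clor_lift_dz_lift(1)] lift_differentiable(1,2)[OF assms]]
    unfolding k_def by (simp add: clor_commute[of "dzb XC p"] add.commute eq_neg_iff_add_eq_0)
  ultimately show ?thesis
    using clor_F_F[OF assms] clor_lift_vanish(1,2)[OF assms] clor_F_dz_lift[OF assms]
      clor_F_dzb_dz_lift[OF assms] clor_lift_dz_lift[OF assms] clor_dz_lift_dz_lift(1,2)[OF assms]
    unfolding k_def by (intro span_null_frame_eq_orthogonal) simp_all
qed

end

end


theorem mainTheorem4:
  fixes U :: "complex set"
    and f N1 N2 H :: "complex \<Rightarrow> real^5"
    and u h :: "complex \<Rightarrow> real"
  assumes U: "open U" "connected U" "U \<noteq> {}"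
    and smooth: "smooth_on U f" "smooth_on U u" "smooth_on U N1" "smooth_on U N2"
    and sphere: "\<forall>p\<in>U. lor (f p) (f p) = 1"
    and conformal: "\<forall>p\<in>U. clor (dz (cplx \<circ> f) p) (dz (cplx \<circ> f) p) = 0
                          \<and> clor (dz (cplx \<circ> f) p) (dzb (cplx \<circ> f) p) = complex_of_real (exp (2 * u p))"
    and normal: "\<forall>p\<in>U. lor (N1 p) (f p) = 0 \<and> lor (N1 p) (pdx f p) = 0 \<and> lor (N1 p) (pdy f p) = 0
                      \<and> lor (N2 p) (f p) = 0 \<and> lor (N2 p) (pdx f p) = 0 \<and> lor (N2 p) (pdy f p) = 0"
    and frame: "\<forall>p\<in>U. lor (N1 p) (N1 p) = 1 \<and> lor (N2 p) (N2 p) = -1 \<and> lor (N1 p) (N2 p) = 0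
                      \<and> lor (N2 p) e4 < 0"
    and meancurv: "\<forall>p\<in>U. dzb (dz (cplx \<circ> f)) p
                      = cplx (- exp (2 * u p) *\<^sub>R f p + exp (2 * u p) *\<^sub>R H p)"
    and marg_trapped: "\<forall>p\<in>U. lor (H p) (H p) = 0"
    and orient: "\<forall>p\<in>U. H p = h p *\<^sub>R (N1 p + N2 p)"
    and nonisotropic: "\<forall>p\<in>U. clor (dz (dz (cplx \<circ> f)) p) (dz (dz (cplx \<circ> f)) p) \<noteq> 0"
  shows "(\<forall>W. is_lift U N1 N2 W \<longrightarrow>
            (\<forall>p\<in>U. lor (f p) (W p) = 0 \<and> lor (f p) (pdx W p) = 0 \<and> lor (f p) (pdy W p) = 0))
       \<and> (\<forall>X. is_lift U N1 N2 X \<longrightarrow>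
            (\<forall>p\<in>U. {v. \<exists>a b c d. v = cscale a (cplx (X p)) + cscale b (dz (cplx \<circ> X) p)
                                   + cscale c (dzb (cplx \<circ> X) p) + cscale d (dzb (dz (cplx \<circ> X)) p)}
                     = {v. clor (cplx (f p)) v = 0}))"
proof -
  interpret marginally_trapped_immersion U f N1 N2 H u h
    using U(1) smooth(1) sphere conformal normal frame meancurv orient nonisotropic
    by (intro marginally_trapped_immersion.intro) auto
  show ?thesis
  proof (rule conjI; intro allI impI ballI)
    fix W p
    assume "is_lift U N1 N2 W" "p \<in> U"
    then show "lor (f p) (W p) = 0 \<and> lor (f p) (pdx W p) = 0 \<and> lor (f p) (pdy W p) = 0"
      by (rule lift_envelope)
  next
    fix X p
    assume "is_lift U N1 N2 X" "p \<in> U"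
    from lift_central_sphere_congruence[OF this]
    show "{v. \<exists>a b c d. v = cscale a (cplx (X p)) + cscale b (dz (cplx \<circ> X) p)
                           + cscale c (dzb (cplx \<circ> X) p) + cscale d (dzb (dz (cplx \<circ> X)) p)}
          = {v. clor (cplx (f p)) v = 0}"
      by (simp add: cscale_eq_scaleC)
  qed
qed

end
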